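(* On $\mathbb{R}^d$ with Cartesian coordinates $x^1,\dots,x^d$, let $\vec E=\sum_i x^i\,\partial/\partial x^i$ be the Euler vector field and let $\vec V=\sum_j V^j(x^1,\dots,x^d)\,\partial/\partial x^j$ be a nonzero vector field whose coefficients $V^j$ are homogeneous polynomials of the same total degree $k\geq 2$. Then the bi-vector $P=\vec V\wedge\vec E$ is Poisson, i.e. $[\![P,P]\!]=0$.
   Context: $[\![\cdot,\cdot]\!]$ denotes the Schouten bracket of multivector fields. *)

theory Defs
  imports "HOL-Analysis.Analysis"
begin

text \<open>Points of R^d are vectors real^'d, coordinates x$i. A vector field is given by
its coefficient functions X i; a bivector field by its components P i j.\<close>

definition partial :: "'d::finite \<Rightarrow> (real^'d \<Rightarrow> real) \<Rightarrow> real^'d \<Rightarrow> real" where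
  "partial l f x = deriv (\<lambda>t. f (x + t *\<^sub>R axis l 1)) 0"

definition homogeneous_poly :: "nat \<Rightarrow> (real^'d::finite \<Rightarrow> real) \<Rightarrow> bool" where
  "homogeneous_poly k f \<longleftrightarrow> (\<exists>(A :: ('d \<Rightarrow> nat) set) (c :: ('d \<Rightarrow> nat) \<Rightarrow> real).
      finite A \<and> (\<forall>\<alpha>\<in>A. sum \<alpha> UNIV = k) \<and>
      (\<forall>x. f x = (\<Sum>\<alpha>\<in>A. c \<alpha> * (\<Prod>i\<in>UNIV. (x $ i) ^ (\<alpha> i)))))"

definition euler_field :: "'d::finite \<Rightarrow> real^'d \<Rightarrow> real" where
  "euler_field i x = x $ i"

definition wedge2 :: "('d \<Rightarrow> real^'d \<Rightarrow> real) \<Rightarrow> ('d \<Rightarrow> real^'d \<Rightarrow> real)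
    \<Rightarrow> 'd \<Rightarrow> 'd \<Rightarrow> real^'d \<Rightarrow> real" where
  "wedge2 X Y i j x = X i x * Y j x - X j x * Y i x"

text \<open>Components of the Schouten bracket [[P,P]] of a bivector with itself, in coordinates
(up to the convention-dependent overall factor 2):
 [[P,P]]^{ijk} = sum_l (P^{il} d_l P^{jk} + P^{jl} d_l P^{ki} + P^{kl} d_l P^{ij}).\<close>
definition schouten_self :: "('d::finite \<Rightarrow> 'd \<Rightarrow> real^'d \<Rightarrow> real) \<Rightarrow> 'd \<Rightarrow> 'd \<Rightarrow> 'd \<Rightarrow> real^'d \<Rightarrow> real" where
  "schouten_self P i j k x = (\<Sum>l\<in>UNIV.
      P i l x * partial l (P j k) x + P j l x * partial l (P k i) x + P k l x * partial l (P i j) x)"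

definition poisson_bivector :: "('d::finite \<Rightarrow> 'd \<Rightarrow> real^'d \<Rightarrow> real) \<Rightarrow> bool" where
  "poisson_bivector P \<longleftrightarrow> (\<forall>i j k x. schouten_self P i j k x = 0)"

end

theory Submission
  imports Defs
begin

text \<open>Write \<open>P\<^sup>i\<^sup>j = V\<^sup>i x\<^sup>j - V\<^sup>j x\<^sup>i\<close> and \<open>W\<^sup>j = \<Sum>\<^sub>l V\<^sup>l \<partial>\<^sub>l V\<^sup>j\<close>. Euler's identity
  \<open>\<Sum>\<^sub>l x\<^sup>l \<partial>\<^sub>l V\<^sup>j = k V\<^sup>j\<close> turns the contraction \<open>\<Sum>\<^sub>l P\<^sup>i\<^sup>l \<partial>\<^sub>l P\<^sup>j\<^sup>m\<close> into
  \<open>(k + 1) V\<^sup>i (V\<^sup>j x\<^sup>m - V\<^sup>m x\<^sup>j) + x\<^sup>i (x\<^sup>j W\<^sup>m - x\<^sup>m W\<^sup>j)\<close>. Both summands have the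
  shape \<open>b\<^sup>i (b\<^sup>j c\<^sup>m - b\<^sup>m c\<^sup>j)\<close>, whose cyclic sum over \<open>(i, j, m)\<close> is zero.\<close>

lemma has_real_derivative_along_line:
  assumes "(f has_derivative f') (at x)"
  shows "((\<lambda>t. f (x + t *\<^sub>R v)) has_real_derivative f' v) (at 0)"
proof -
  have "((\<lambda>t. x + t *\<^sub>R v) has_derivative (\<lambda>t. t *\<^sub>R v)) (at 0)"
    by (auto intro!: derivative_eq_intros)
  moreover have "(f has_derivative f') (at (x + 0 *\<^sub>R v))"
    using assms by simp
  ultimately have "((\<lambda>t. f (x + t *\<^sub>R v)) has_derivative (\<lambda>t. f' (t *\<^sub>R v))) (at 0)"
    by (rule has_derivative_compose[unfolded o_def])
  then show ?thesis
    using linear_scale[OF has_derivative_linear[OF assms]]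
    by (simp add: has_field_derivative_def mult_commute_abs)
qed

lemma partial_eq_has_derivative:
  assumes "(f has_derivative f') (at x)"
  shows "partial l f x = f' (axis l 1)"
  unfolding partial_def by (rule DERIV_imp_deriv[OF has_real_derivative_along_line[OF assms]])

lemma sum_mult_partial_eq_has_derivative:
  assumes "(f has_derivative f') (at x)"
  shows "(\<Sum>l\<in>UNIV. v $ l * partial l f x) = f' v"
proof -
  have "(\<Sum>l\<in>UNIV. v $ l * partial l f x) = f' (\<Sum>l\<in>UNIV. v $ l *\<^sub>R axis l 1)"
    using has_derivative_linear[OF assms]
    by (simp add: partial_eq_has_derivative[OF assms] linear_sum linear_scale)
  also have "(\<Sum>l\<in>UNIV. v $ l *\<^sub>R axis l 1) = v"
    using basis_expansion[of v] by (simp add: scalar_mult_eq_scaleR)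
  finally show ?thesis .
qed

lemma homogeneous_poly_scaleR:
  assumes "homogeneous_poly k f"
  shows "f (c *\<^sub>R x) = c ^ k * f x"
proof -
  obtain A coef where degree: "\<forall>\<alpha>\<in>A. sum \<alpha> UNIV = k"
    and f: "\<And>x. f x = (\<Sum>\<alpha>\<in>A. coef \<alpha> * (\<Prod>i\<in>UNIV. (x $ i) ^ \<alpha> i))"
    using assms unfolding homogeneous_poly_def by blast
  have "(\<Prod>i\<in>UNIV. (c * x $ i) ^ \<alpha> i) = c ^ k * (\<Prod>i\<in>UNIV. (x $ i) ^ \<alpha> i)"
    if "\<alpha> \<in> A" for \<alpha>
  proof -
    have "(\<Prod>i\<in>UNIV. c ^ \<alpha> i) = c ^ k"
      using power_sum[of c \<alpha> UNIV] degree that by simp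
    then show ?thesis
      by (simp add: power_mult_distrib prod.distrib)
  qed
  then show ?thesis
    by (simp add: f sum_distrib_left algebra_simps)
qed

lemma homogeneous_poly_differentiable:
  assumes "homogeneous_poly k f"
  shows "f differentiable (at x)"
proof -
  obtain A c where "finite A" and f: "f = (\<lambda>x. \<Sum>\<alpha>\<in>A. c \<alpha> * (\<Prod>i\<in>UNIV. (x $ i) ^ \<alpha> i))"
    using assms unfolding homogeneous_poly_def by blast
  have "(\<lambda>x. \<Prod>i\<in>UNIV. (x $ i) ^ \<alpha> i) differentiable (at x)" for \<alpha>
    unfolding differentiable_def
    by (rule exI, rule has_derivative_prod, rule has_derivative_power,
        rule bounded_linear.has_derivative[OF bounded_linear_vec_nth], rule has_derivative_ident)
  then show ?thesis
    unfolding f using \<open>finite A\<close> by (auto intro!: differentiable_sum differentiable_mult)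
qed

lemma homogeneous_poly_euler_identity:
  assumes "homogeneous_poly k f"
  shows "(\<Sum>l\<in>UNIV. x $ l * partial l f x) = real k * f x"
proof -
  obtain f' where f': "(f has_derivative f') (at x)"
    using homogeneous_poly_differentiable[OF assms] unfolding differentiable_def by blast
  have "(\<lambda>t. f (x + t *\<^sub>R x)) = (\<lambda>t. (1 + t) ^ k * f x)"
    using homogeneous_poly_scaleR[OF assms] by (metis scaleR_collapse scaleR_add_left scaleR_one)
  moreover have "((\<lambda>t. (1 + t) ^ k * f x) has_real_derivative real k * f x) (at 0)"
    by (auto intro!: derivative_eq_intros)
  ultimately have "f' x = real k * f x"
    using has_real_derivative_along_line[OF f'] DERIV_unique by metis
  then show ?thesis
    using sum_mult_partial_eq_has_derivative[OF f'] by simp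
qed

lemma partial_wedge2_euler_field:
  assumes "V a differentiable (at x)" and "V b differentiable (at x)"
  shows "partial l (wedge2 V euler_field a b) x =
    partial l (V a) x * x $ b - partial l (V b) x * x $ a
    + (if l = b then V a x else 0) - (if l = a then V b x else 0)"
proof -
  obtain Va' Vb' where Va': "(V a has_derivative Va') (at x)"
    and Vb': "(V b has_derivative Vb') (at x)"
    using assms unfolding differentiable_def by blast
  have "(wedge2 V euler_field a b has_derivative
      (\<lambda>h. Va' h * x $ b + V a x * h $ b - (Vb' h * x $ a + V b x * h $ a))) (at x)"
    unfolding wedge2_def euler_field_def
    by (auto intro!: derivative_eq_intros Va' Vb'
        bounded_linear.has_derivative[OF bounded_linear_vec_nth])
  then show ?thesis
    by (simp add: partial_eq_has_derivative partial_eq_has_derivative[OF Va']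
        partial_eq_has_derivative[OF Vb'] axis_def)
qed

lemma sum_wedge2_euler_field_mult_partial:
  assumes differentiable: "\<And>j. V j differentiable (at x)"
    and euler: "\<And>j. (\<Sum>l\<in>UNIV. x $ l * partial l (V j) x) = c * V j x"
  shows "(\<Sum>l\<in>UNIV. wedge2 V euler_field i l x * partial l (wedge2 V euler_field j m) x) =
    (c + 1) * V i x * (V j x * x $ m - V m x * x $ j)
    - x $ i * (x $ m * (\<Sum>l\<in>UNIV. V l x * partial l (V j) x)
               - x $ j * (\<Sum>l\<in>UNIV. V l x * partial l (V m) x))"
    (is "?lhs = _")
proof -
  let ?D = "\<lambda>a l. partial l (V a) x"
  have "?lhs = (\<Sum>l\<in>UNIV. V i x * x $ m * (x $ l * ?D j l) - x $ i * x $ m * (V l x * ?D j l)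
      - (V i x * x $ j * (x $ l * ?D m l) - x $ i * x $ j * (V l x * ?D m l))
      + (if l = m then (V i x * x $ l - V l x * x $ i) * V j x else 0)
      - (if l = j then (V i x * x $ l - V l x * x $ i) * V m x else 0))"
    by (rule sum.cong)
      (auto simp: partial_wedge2_euler_field differentiable wedge2_def euler_field_def algebra_simps)
  also have "\<dots> = V i x * x $ m * (\<Sum>l\<in>UNIV. x $ l * ?D j l)
      - x $ i * x $ m * (\<Sum>l\<in>UNIV. V l x * ?D j l)
      - (V i x * x $ j * (\<Sum>l\<in>UNIV. x $ l * ?D m l)
         - x $ i * x $ j * (\<Sum>l\<in>UNIV. V l x * ?D m l))
      + (V i x * x $ m - V m x * x $ i) * V j x - (V i x * x $ j - V j x * x $ i) * V m x"
    by (simp add: sum.distrib sum_subtractf sum_distrib_left)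
  finally show ?thesis
    by (simp add: euler algebra_simps)
qed

lemma poisson_wedge2_euler_field:
  assumes "\<And>j x. V j differentiable (at x)"
    and "\<And>j x. (\<Sum>l\<in>UNIV. x $ l * partial l (V j) x) = c * V j x"
  shows "poisson_bivector (wedge2 V euler_field)"
  unfolding poisson_bivector_def schouten_self_def sum.distrib
    sum_wedge2_euler_field_mult_partial[OF assms]
  by (simp add: algebra_simps)

theorem lemmaA1:
  fixes V :: "'d::finite \<Rightarrow> real^'d \<Rightarrow> real" and k :: nat
  assumes "k \<ge> 2"
    and "\<forall>j. homogeneous_poly k (V j)"
    and "V \<noteq> (\<lambda>j x. 0)"
  shows "poisson_bivector (wedge2 V euler_field)"
  using assms(2)
  by (intro poisson_wedge2_euler_field[where c = "real k"]
      homogeneous_poly_differentiable homogeneous_poly_euler_identity) blast+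

end
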